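(* Let $\mathcal C\subseteq2^{[n]}$ be a stable hyperplane code. Then $\mathcal C$ has no sphere link obstructions: there is no non-maximal face $F$ of the polar complex $\Gamma(\mathcal C)$ such that $\operatorname{link}_F\Gamma(\mathcal C)$ is neither collapsible nor equal to $\Gamma(2^{[n]\setminus\underline F})$.
   Context: A code is a subset $\mathcal C\subseteq 2^{[n]}$. An oriented affine hyperplane in $\mathbb R^d$ is $H=\{x: w\cdot x-h=0\}$ with $w\neq0$, and $H^{+}=\{w\cdot x-h>0\}$, $H^-=\{w\cdot x-h<0\}$. For hyperplanes $\mathcal H=\{H_1,\dots,H_n\}$ and open convex $X\subseteq\mathbb R^d$, the atom of $\sigma\subseteq[n]$ is $A_\sigma=\bigl(\bigcap_{i\in\sigma}(H_i^+\cap X)\bigr)\setminus\bigcup_{j\notin\sigma}H_j^+$ ($A_\emptyset=X\setminus\bigcup_iH_i^+$), and $\mathrm{code}(\mathcal H,X)=\{\sigma:A_\sigma\neq\emptyset\}$. $(\mathcal H,X)$ is stable if $X$ is open convex and whenever $X\cap\bigcap_{i\in\sigma}H_i\ne\emptyset$, $\dim\bigcap_{i\in\sigma}H_i=d-|\sigma|$. A stable hyperplane code is $\mathrm{code}(\mathcal H,X)$ for a stable pair. Polar complex: on vertex set $[n]\sqcup\overline{[n]}$, $\overline{[n]}=\{\bar1,\dots,\bar n\}$, let $\Sigma(\sigma)=\sigma\sqcup\{\bar i:i\in[n]\setminus\sigma\}$ and $\Gamma(\mathcal C)$ be the simplicial complex of all subsets of the sets $\Sigma(\sigma)$, $\sigma\in\mathcal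 C$. For a face $F$ write $F=F^+\sqcup\{\bar j:j\in F^-\}$ with $F^\pm\subseteq[n]$; its support is $\underline F=F^+\cup F^-$. For $S\subseteq[n]$, $\Gamma(2^S)$ is the simplicial complex on $S\sqcup\{\bar i:i\in S\}$ whose faces are all subsets containing no pair $\{i,\bar i\}$ (for $S=\emptyset$ it is $\{\emptyset\}$). $\operatorname{link}_F\Delta=\{\nu\in\Delta:\nu\cap F=\emptyset,\nu\cup F\in\Delta\}$. A free pair in $\Delta$ is $(\sigma,\tau)$ with $\tau$ a facet, $\sigma\subsetneq\tau$, $\sigma$ in no other facet; collapsing along $\sigma$ gives $\{\nu\in\Delta:\nu\not\supseteq\sigma\}$; $\Delta$ is collapsible if finitely many collapses yield the void complex $\{\}$ (so $\{\}$ is collapsible, $\{\emptyset\}$ is not). *)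

theory Defs
  imports "HOL-Analysis.Analysis"
begin

definition hyp :: "(nat \<Rightarrow> 'a::euclidean_space) \<Rightarrow> (nat \<Rightarrow> real) \<Rightarrow> nat \<Rightarrow> 'a set" where
  "hyp w h i = {x. w i \<bullet> x - h i = 0}"

definition hyp_pos :: "(nat \<Rightarrow> 'a::euclidean_space) \<Rightarrow> (nat \<Rightarrow> real) \<Rightarrow> nat \<Rightarrow> 'a set" where
  "hyp_pos w h i = {x. w i \<bullet> x - h i > 0}"

definition atom :: "nat \<Rightarrow> (nat \<Rightarrow> 'a::euclidean_space) \<Rightarrow> (nat \<Rightarrow> real) \<Rightarrow> 'a set \<Rightarrow> nat set \<Rightarrow> 'a set" where
  "atom n w h X \<sigma> = {x \<in> X. (\<forall>i\<in>\<sigma>. x \<in> hyp_pos w h i) \<and> (\<forall>j\<in>{1..n} - \<sigma>. x \<notin> hyp_pos w h j)}"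

definition hcode :: "nat \<Rightarrow> (nat \<Rightarrow> 'a::euclidean_space) \<Rightarrow> (nat \<Rightarrow> real) \<Rightarrow> 'a set \<Rightarrow> nat set set" where
  "hcode n w h X = {\<sigma>. \<sigma> \<subseteq> {1..n} \<and> atom n w h X \<sigma> \<noteq> {}}"

definition stable_pair :: "nat \<Rightarrow> (nat \<Rightarrow> 'a::euclidean_space) \<Rightarrow> (nat \<Rightarrow> real) \<Rightarrow> 'a set \<Rightarrow> bool" where
  "stable_pair n w h X \<longleftrightarrow>
     (\<forall>i\<in>{1..n}. w i \<noteq> 0) \<and> open X \<and> convex X \<and>
     (\<forall>\<sigma>. \<sigma> \<subseteq> {1..n} \<longrightarrow> X \<inter> (\<Inter>i\<in>\<sigma>. hyp w h i) \<noteq> {} \<longrightarrow>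
        aff_dim (\<Inter>i\<in>\<sigma>. hyp w h i) = int DIM('a) - int (card \<sigma>))"

datatype pvert = Pos nat | Neg nat   (* Pos i = i, Neg i = \bar i *)

definition Sig :: "nat \<Rightarrow> nat set \<Rightarrow> pvert set" where
  "Sig n \<sigma> = Pos ` \<sigma> \<union> Neg ` ({1..n} - \<sigma>)"

definition polar_complex :: "nat \<Rightarrow> nat set set \<Rightarrow> pvert set set" where
  "polar_complex n C = {F. \<exists>\<sigma>\<in>C. F \<subseteq> Sig n \<sigma>}"

definition pos_part :: "pvert set \<Rightarrow> nat set" where
  "pos_part F = {i. Pos i \<in> F}"

definition neg_part :: "pvert set \<Rightarrow> nat set" where
  "neg_part F = {i. Neg i \<in> F}"

definition supp :: "pvert set \<Rightarrow> nat set" where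
  "supp F = pos_part F \<union> neg_part F"

text \<open>Gamma(2^S): all subsets of S \<union> bar S containing no pair {i, bar i}.\<close>
definition full_polar :: "nat set \<Rightarrow> pvert set set" where
  "full_polar S = {G. G \<subseteq> Pos ` S \<union> Neg ` S \<and> \<not> (\<exists>i. Pos i \<in> G \<and> Neg i \<in> G)}"

definition link :: "'v set \<Rightarrow> 'v set set \<Rightarrow> 'v set set" where
  "link F \<Delta> = {\<nu> \<in> \<Delta>. \<nu> \<inter> F = {} \<and> \<nu> \<union> F \<in> \<Delta>}"

definition facet :: "'v set set \<Rightarrow> 'v set \<Rightarrow> bool" where
  "facet \<Delta> \<tau> \<longleftrightarrow> \<tau> \<in> \<Delta> \<and> (\<forall>\<nu>\<in>\<Delta>. \<tau> \<subseteq> \<nu> \<longrightarrow> \<nu> = \<tau>)"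

definition free_pair :: "'v set set \<Rightarrow> 'v set \<Rightarrow> 'v set \<Rightarrow> bool" where
  "free_pair \<Delta> \<sigma> \<tau> \<longleftrightarrow> facet \<Delta> \<tau> \<and> \<sigma> \<subset> \<tau> \<and>
     (\<forall>\<tau>'. facet \<Delta> \<tau>' \<and> \<sigma> \<subseteq> \<tau>' \<longrightarrow> \<tau>' = \<tau>)"

definition collapse :: "'v set set \<Rightarrow> 'v set \<Rightarrow> 'v set set" where
  "collapse \<Delta> \<sigma> = {\<nu> \<in> \<Delta>. \<not> \<sigma> \<subseteq> \<nu>}"

inductive collapsible :: "'v set set \<Rightarrow> bool" where
  void: "collapsible {}"
| step: "free_pair \<Delta> \<sigma> \<tau> \<Longrightarrow> collapsible (collapse \<Delta> \<sigma>) \<Longrightarrow> collapsible \<Delta>"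

end

theory Submission
  imports Defs
begin

(* A face of the polar complex prescribes a side of some of the hyperplanes, and by stability it
   lies in Gamma(C) exactly when the corresponding open cell meets X: a point on a closed negative
   side can be pushed into the open one.  Hence the link of F is a complex of the same kind, for the
   open convex set cut out by F and the hyperplanes off supp F.  By induction on the set S of
   hyperplanes, such a complex is collapsible unless X meets all hyperplanes of S, and then it is
   all of Gamma(2^S).  Adding H_k, the complex is D \<union> Pos k * A \<union> Neg k * B with D = A \<union> B, where
   A and B belong to the two open sides of H_k; a full A (or B) makes its cone collapsible, and if
   both sides of H_k meet the common intersection, then so does H_k by convexity. *)

definition side_val :: "(nat \<Rightarrow> 'a::euclidean_space) \<Rightarrow> (nat \<Rightarrow> real) \<Rightarrow> pvert \<Rightarrow> 'a \<Rightarrow> real" where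
  "side_val w h v x = (case v of Pos i \<Rightarrow> w i \<bullet> x - h i | Neg i \<Rightarrow> h i - w i \<bullet> x)"

definition cell :: "(nat \<Rightarrow> 'a::euclidean_space) \<Rightarrow> (nat \<Rightarrow> real) \<Rightarrow> 'a set \<Rightarrow> pvert set \<Rightarrow> 'a set" where
  "cell w h X G = {x \<in> X. \<forall>v\<in>G. 0 < side_val w h v x}"

definition cell_complex :: "(nat \<Rightarrow> 'a::euclidean_space) \<Rightarrow> (nat \<Rightarrow> real) \<Rightarrow> 'a set \<Rightarrow> nat set \<Rightarrow> pvert set set" where
  "cell_complex w h X S = {G. G \<subseteq> Pos ` S \<union> Neg ` S \<and> cell w h X G \<noteq> {}}"

definition stable_on :: "(nat \<Rightarrow> 'a::euclidean_space) \<Rightarrow> (nat \<Rightarrow> real) \<Rightarrow> 'a set \<Rightarrow> nat set \<Rightarrow> bool" where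
  "stable_on w h X S \<longleftrightarrow> (\<forall>i\<in>S. w i \<noteq> 0) \<and>
     (\<forall>\<sigma>. \<sigma> \<subseteq> S \<longrightarrow> X \<inter> (\<Inter>i\<in>\<sigma>. hyp w h i) \<noteq> {} \<longrightarrow>
        aff_dim (\<Inter>i\<in>\<sigma>. hyp w h i) = int DIM('a) - int (card \<sigma>))"

lemma side_val_pos_set:
  "{x. 0 < side_val w h v x} = (case v of Pos i \<Rightarrow> {x. w i \<bullet> x > h i} | Neg i \<Rightarrow> {x. w i \<bullet> x < h i})"
  by (cases v) (auto simp: side_val_def)

lemma cell_eq_Int: "cell w h X G = X \<inter> (\<Inter>v\<in>G. {x. 0 < side_val w h v x})"
  by (auto simp: cell_def)

lemma open_cell: "open X \<Longrightarrow> finite G \<Longrightarrow> open (cell w h X G)"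
  unfolding cell_eq_Int
  by (intro open_Int open_INT)
     (auto simp: side_val_pos_set split: pvert.splits intro: open_halfspace_gt open_halfspace_lt)

lemma convex_cell: "convex X \<Longrightarrow> convex (cell w h X G)"
  unfolding cell_eq_Int
  by (intro convex_Int convex_INT)
     (auto simp: side_val_pos_set split: pvert.splits intro: convex_halfspace_gt convex_halfspace_lt)

lemma cell_cell: "cell w h (cell w h X F) G = cell w h X (F \<union> G)"
  by (auto simp: cell_def)

lemma cell_subset: "cell w h X G \<subseteq> X"
  by (auto simp: cell_def)

lemma cell_antimono: "F \<subseteq> G \<Longrightarrow> cell w h X G \<subseteq> cell w h X F"
  by (auto simp: cell_def)

lemma cell_complex_subset_full_polar: "cell_complex w h X S \<subseteq> full_polar S"
proof
  fix G assume "G \<in> cell_complex w h X S"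
  then obtain x where G: "G \<subseteq> Pos ` S \<union> Neg ` S" and x: "\<forall>v\<in>G. 0 < side_val w h v x"
    by (auto simp: cell_complex_def cell_def)
  have "\<not> (Pos i \<in> G \<and> Neg i \<in> G)" for i
    using x[rule_format, of "Pos i"] x[rule_format, of "Neg i"] by (auto simp: side_val_def)
  then show "G \<in> full_polar S" using G by (auto simp: full_polar_def)
qed

lemma finite_cell_complex: "finite S \<Longrightarrow> finite (cell_complex w h X S)"
  by (rule finite_subset[of _ "Pow (Pos ` S \<union> Neg ` S)"]) (auto simp: cell_complex_def)

lemma finite_cell_complex_face: "finite S \<Longrightarrow> G \<in> cell_complex w h X S \<Longrightarrow> finite G"
  by (rule finite_subset[of _ "Pos ` S \<union> Neg ` S"]) (auto simp: cell_complex_def)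

lemma stable_on_mono:
  assumes "stable_on w h X S" "S' \<subseteq> S" "Y \<subseteq> X"
  shows "stable_on w h Y S'"
  unfolding stable_on_def
proof (intro conjI allI impI ballI)
  fix \<sigma> assume \<sigma>: "\<sigma> \<subseteq> S'" "Y \<inter> (\<Inter>i\<in>\<sigma>. hyp w h i) \<noteq> {}"
  then have "\<sigma> \<subseteq> S" "X \<inter> (\<Inter>i\<in>\<sigma>. hyp w h i) \<noteq> {}" using assms(2,3) by auto
  then show "aff_dim (\<Inter>i\<in>\<sigma>. hyp w h i) = int DIM('a) - int (card \<sigma>)"
    using assms(1) unfolding stable_on_def by blast
qed (use assms in \<open>auto simp: stable_on_def\<close>)

lemma open_ray_point:
  fixes p v :: "'a::real_normed_vector"
  assumes "open U" "p \<in> U"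
  shows "\<exists>t>0. p + t *\<^sub>R v \<in> U"
proof -
  have "((\<lambda>t. p + t *\<^sub>R v) \<longlongrightarrow> p) (at_right 0)"
    by (auto intro!: tendsto_eq_intros)
  then have "\<forall>\<^sub>F t in at_right 0. p + t *\<^sub>R v \<in> U"
    using assms by (rule topological_tendstoD)
  then show ?thesis
    unfolding eventually_at_right_field by (metis field_lbound_gt_zero)
qed

section \<open>Stability makes the normals at a point independent\<close>

(* Removing one hyperplane from a flat through a point of X raises its dimension, so some point of
   the bigger flat leaves H_i; its difference to p, rescaled, is a dual vector. *)
lemma stable_on_dual_vector:
  assumes st: "stable_on w h X S" and fin: "finite \<sigma>" and sub: "\<sigma> \<subseteq> S" and pX: "p \<in> X"
    and ph: "\<forall>j\<in>\<sigma>. w j \<bullet> p = h j" and i: "i \<in> \<sigma>"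
  shows "\<exists>u. w i \<bullet> u = 1 \<and> (\<forall>j\<in>\<sigma> - {i}. w j \<bullet> u = 0)"
proof -
  have dim: "aff_dim (\<Inter>j\<in>\<tau>. hyp w h j) = int DIM('a) - int (card \<tau>)" if "\<tau> \<subseteq> \<sigma>" for \<tau>
  proof -
    have "p \<in> X \<inter> (\<Inter>j\<in>\<tau>. hyp w h j)" using pX ph that by (auto simp: hyp_def)
    then show ?thesis using st that sub unfolding stable_on_def by blast
  qed
  let ?A = "\<Inter>j\<in>\<sigma> - {i}. hyp w h j" and ?B = "\<Inter>j\<in>\<sigma>. hyp w h j"
  have "card (\<sigma> - {i}) < card \<sigma>" using fin i by (rule card_Diff1_less)
  then have "?A \<noteq> ?B" using dim[of "\<sigma> - {i}"] dim[of \<sigma>] by auto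
  moreover have "?B \<subseteq> ?A" by auto
  ultimately obtain q where qA: "q \<in> ?A" and qB: "q \<notin> ?B" by blast
  have c: "w i \<bullet> q - h i \<noteq> 0" using qA qB i by (auto simp: hyp_def)
  show ?thesis
  proof (intro exI conjI ballI)
    show "w i \<bullet> ((1 / (w i \<bullet> q - h i)) *\<^sub>R (q - p)) = 1"
      using c ph i by (simp add: inner_diff_right)
    fix j assume "j \<in> \<sigma> - {i}"
    then show "w j \<bullet> ((1 / (w i \<bullet> q - h i)) *\<^sub>R (q - p)) = 0"
      using qA ph by (simp add: inner_diff_right hyp_def)
  qed
qed

lemma stable_on_solve_inner:
  assumes st: "stable_on w h X S" and fin: "finite \<sigma>" and sub: "\<sigma> \<subseteq> S" and pX: "p \<in> X"
    and ph: "\<forall>j\<in>\<sigma>. w j \<bullet> p = h j"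
  shows "\<exists>v. \<forall>j\<in>\<sigma>. w j \<bullet> v = e j"
proof -
  obtain u where u: "\<And>i. i \<in> \<sigma> \<Longrightarrow> w i \<bullet> u i = 1 \<and> (\<forall>j\<in>\<sigma> - {i}. w j \<bullet> u i = 0)"
    using stable_on_dual_vector[OF st fin sub pX ph] by metis
  have "w j \<bullet> (\<Sum>i\<in>\<sigma>. e i *\<^sub>R u i) = e j" if j: "j \<in> \<sigma>" for j
  proof -
    have "w j \<bullet> (\<Sum>i\<in>\<sigma>. e i *\<^sub>R u i) = e j * (w j \<bullet> u j) + (\<Sum>i\<in>\<sigma> - {j}. e i * (w j \<bullet> u i))"
      using fin j by (simp add: inner_sum_right inner_add_right sum.remove)
    also have "(\<Sum>i\<in>\<sigma> - {j}. e i * (w j \<bullet> u i)) = 0"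
      using u j by (intro sum.neutral) auto
    finally show ?thesis using u[OF j] by simp
  qed
  then show ?thesis by blast
qed

(* Near a point of X on all hyperplanes of S every sign pattern occurs: move off the point along a
   vector v with w_j . v = +1 or -1 as prescribed. *)
lemma cell_complex_eq_full_polar:
  assumes op: "open X" and fin: "finite S" and st: "stable_on w h X S"
    and meet: "X \<inter> (\<Inter>i\<in>S. hyp w h i) \<noteq> {}"
  shows "cell_complex w h X S = full_polar S"
proof
  obtain p where pX: "p \<in> X" and "p \<in> (\<Inter>i\<in>S. hyp w h i)" using meet by blast
  then have ph: "\<forall>i\<in>S. w i \<bullet> p = h i" by (simp add: hyp_def)
  show "full_polar S \<subseteq> cell_complex w h X S"
  proof
    fix G assume G: "G \<in> full_polar S"
    define e where "e j = (if Pos j \<in> G then 1 else -1 :: real)" for j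
    obtain v where v: "\<forall>j\<in>S. w j \<bullet> v = e j"
      using stable_on_solve_inner[OF st fin order_refl pX ph] by blast
    obtain t where t: "t > 0" "p + t *\<^sub>R v \<in> X" using open_ray_point[OF op pX] by blast
    have "0 < side_val w h u (p + t *\<^sub>R v)" if u: "u \<in> G" for u
    proof (cases u)
      case (Pos i)
      then have "i \<in> S" using G u by (auto simp: full_polar_def)
      then show ?thesis using Pos u v ph t(1) by (simp add: side_val_def inner_add_right e_def)
    next
      case (Neg i)
      then have "i \<in> S" "Pos i \<notin> G" using G u by (auto simp: full_polar_def)
      then show ?thesis using Neg v ph t(1) by (simp add: side_val_def inner_add_right e_def)
    qed
    then have "p + t *\<^sub>R v \<in> cell w h X G" using t(2) by (simp add: cell_def)
    then show "G \<in> cell_complex w h X S" using G by (auto simp: cell_complex_def full_polar_def)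
  qed
qed (rule cell_complex_subset_full_polar)

section \<open>Collapsing cones\<close>

lemma facet_Un_cone_image_iff:
  assumes aB: "\<forall>\<rho>\<in>B. a \<notin> \<rho>" and aY: "\<forall>\<nu>\<in>Y. a \<notin> \<nu>" and \<rho>: "\<rho> \<in> B"
  shows "facet (Y \<union> insert a ` B) (insert a \<rho>) \<longleftrightarrow> facet B \<rho>"
proof
  assume K: "facet (Y \<union> insert a ` B) (insert a \<rho>)"
  show "facet B \<rho>"
    unfolding facet_def
  proof (intro conjI ballI impI)
    fix \<rho>' assume \<rho>': "\<rho>' \<in> B" "\<rho> \<subseteq> \<rho>'"
    have "insert a \<rho>' \<in> Y \<union> insert a ` B" "insert a \<rho> \<subseteq> insert a \<rho>'"
      using \<rho>' by blast+
    then have "insert a \<rho>' = insert a \<rho>" using K unfolding facet_def by blast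
    moreover have "a \<notin> \<rho>'" "a \<notin> \<rho>" using \<rho>'(1) \<rho> aB by blast+
    ultimately show "\<rho>' = \<rho>" by (simp add: insert_ident)
  qed (rule \<rho>)
next
  assume B: "facet B \<rho>"
  show "facet (Y \<union> insert a ` B) (insert a \<rho>)"
    unfolding facet_def
  proof (intro conjI ballI impI)
    show "insert a \<rho> \<in> Y \<union> insert a ` B" using \<rho> by blast
    fix \<nu> assume \<nu>: "\<nu> \<in> Y \<union> insert a ` B" "insert a \<rho> \<subseteq> \<nu>"
    then have "\<nu> \<notin> Y" using aY by blast
    then obtain \<rho>' where \<rho>': "\<rho>' \<in> B" "\<nu> = insert a \<rho>'" using \<nu>(1) by blast
    have "a \<notin> \<rho>" using \<rho> aB by blast
    then have "\<rho> \<subseteq> \<rho>'" using \<nu>(2) \<rho>'(2) by blast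
    then have "\<rho>' = \<rho>" using B \<rho>'(1) unfolding facet_def by blast
    then show "\<nu> = insert a \<rho>" using \<rho>'(2) by simp
  qed
qed

lemma facet_Un_cone_image:
  assumes aB: "\<forall>\<rho>\<in>B. a \<notin> \<rho>" and aY: "\<forall>\<nu>\<in>Y. a \<notin> \<nu>"
    and \<tau>: "facet (Y \<union> insert a ` B) \<tau>" "a \<in> \<tau>"
  obtains \<rho> where "\<rho> \<in> B" "\<tau> = insert a \<rho>" "facet B \<rho>"
proof -
  have "\<tau> \<in> Y \<union> insert a ` B" using \<tau>(1) by (simp add: facet_def)
  then obtain \<rho> where \<rho>: "\<rho> \<in> B" "\<tau> = insert a \<rho>" using \<tau>(2) aY by blast
  moreover have "facet B \<rho>"
    using facet_Un_cone_image_iff[OF aB aY \<rho>(1)] \<tau>(1) unfolding \<rho>(2) by blast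
  ultimately show thesis by (rule that)
qed

lemma free_pair_Un_cone_image:
  assumes free: "free_pair B \<sigma> \<tau>" and aB: "\<forall>\<rho>\<in>B. a \<notin> \<rho>" and aY: "\<forall>\<nu>\<in>Y. a \<notin> \<nu>"
  shows "free_pair (Y \<union> insert a ` B) (insert a \<sigma>) (insert a \<tau>)"
proof -
  have \<tau>: "facet B \<tau>" "\<sigma> \<subset> \<tau>" and uniq: "\<And>\<tau>'. facet B \<tau>' \<Longrightarrow> \<sigma> \<subseteq> \<tau>' \<Longrightarrow> \<tau>' = \<tau>"
    using free by (auto simp: free_pair_def)
  have "\<tau> \<in> B" using \<tau>(1) by (simp add: facet_def)
  then have a\<tau>: "a \<notin> \<tau>" using aB by blast
  have "insert a \<sigma> \<subset> insert a \<tau>" using \<tau>(2) a\<tau> by (auto simp: psubset_eq)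
  moreover have "facet (Y \<union> insert a ` B) (insert a \<tau>)"
    using facet_Un_cone_image_iff[OF aB aY \<open>\<tau> \<in> B\<close>] \<tau>(1) by simp
  moreover have "\<tau>' = insert a \<tau>"
    if \<tau>': "facet (Y \<union> insert a ` B) \<tau>'" "insert a \<sigma> \<subseteq> \<tau>'" for \<tau>'
  proof -
    have "a \<in> \<tau>'" using \<tau>'(2) by blast
    then obtain \<rho> where \<rho>: "\<rho> \<in> B" "\<tau>' = insert a \<rho>" "facet B \<rho>"
      by (rule facet_Un_cone_image[OF aB aY \<tau>'(1)])
    have "\<sigma> \<subseteq> \<rho>" using \<tau>'(2) \<rho>(1,2) aB \<tau>(2) a\<tau> by blast
    then show ?thesis using uniq[OF \<rho>(3)] \<rho>(2) by simp
  qed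
  ultimately show ?thesis unfolding free_pair_def by blast
qed

lemma collapse_Un_cone_image:
  assumes "a \<notin> \<sigma>" "\<forall>\<rho>\<in>B. a \<notin> \<rho>" "\<forall>\<nu>\<in>Y. a \<notin> \<nu>"
  shows "collapse (Y \<union> insert a ` B) (insert a \<sigma>) = Y \<union> insert a ` collapse B \<sigma>"
  using assms by (auto simp: collapse_def)

lemma collapsible_Un_cone_image:
  assumes "collapsible B" "\<forall>\<rho>\<in>B. a \<notin> \<rho>" "\<forall>\<nu>\<in>Y. a \<notin> \<nu>" "collapsible Y"
  shows "collapsible (Y \<union> insert a ` B)"
  using assms
proof (induction B rule: collapsible.induct)
  case void
  then show ?case by simp
next
  case (step B \<sigma> \<tau>)
  have "\<sigma> \<subset> \<tau>" "\<tau> \<in> B" using step.hyps(1) by (simp_all add: free_pair_def facet_def)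
  then have "a \<notin> \<sigma>" using step.prems(1) by blast
  then have "collapse (Y \<union> insert a ` B) (insert a \<sigma>) = Y \<union> insert a ` collapse B \<sigma>"
    using step.prems(1,2) by (rule collapse_Un_cone_image)
  moreover have "collapsible (Y \<union> insert a ` collapse B \<sigma>)"
    using step.prems by (intro step.IH) (auto simp: collapse_def)
  ultimately have "collapsible (collapse (Y \<union> insert a ` B) (insert a \<sigma>))" by simp
  with free_pair_Un_cone_image[OF step.hyps(1) step.prems(1,2)] show ?case
    by (rule collapsible.step)
qed

(* Collapse the cone from the top: a facet rho of D is free in the cone, with partner a rho. *)
lemma collapsible_cone:
  assumes "finite D" "\<forall>\<rho>\<in>D. a \<notin> \<rho>"
  shows "collapsible (D \<union> insert a ` D)"
  using assms
proof (induction D rule: finite_psubset_induct)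
  case (psubset D)
  show ?case
  proof (cases "D = {}")
    case False
    obtain \<rho> where \<rho>: "\<rho> \<in> D" "\<forall>\<rho>'\<in>D. \<rho> \<subseteq> \<rho>' \<longrightarrow> \<rho> = \<rho>'"
      using finite_has_maximal[OF psubset.hyps(1) False] by blast
    then have facet: "facet D \<rho>" unfolding facet_def by blast
    have a\<rho>: "a \<notin> \<rho>" using \<rho>(1) psubset.prems by blast
    let ?K = "D \<union> insert a ` D"
    have "\<tau> = insert a \<rho>" if \<tau>: "facet ?K \<tau>" "\<rho> \<subseteq> \<tau>" for \<tau>
    proof (cases "a \<in> \<tau>")
      case True
      then obtain \<rho>' where \<rho>': "\<rho>' \<in> D" "\<tau> = insert a \<rho>'"
        by (rule facet_Un_cone_image[OF psubset.prems psubset.prems \<tau>(1)])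
      then have "\<rho> \<subseteq> \<rho>'" using \<tau>(2) a\<rho> by blast
      then have "\<rho>' = \<rho>" using \<rho>(2) \<rho>'(1) by blast
      then show ?thesis using \<rho>'(2) by simp
    next
      case False
      then have "\<tau> \<in> D" using \<tau>(1) unfolding facet_def by blast
      then have "insert a \<tau> \<in> ?K" "\<tau> \<subseteq> insert a \<tau>" by blast+
      then have "insert a \<tau> = \<tau>" using \<tau>(1) unfolding facet_def by blast
      with False show ?thesis by blast
    qed
    moreover have "facet ?K (insert a \<rho>)"
      using facet_Un_cone_image_iff[OF psubset.prems psubset.prems \<rho>(1)] facet by simp
    moreover have "\<rho> \<subset> insert a \<rho>" using a\<rho> by blast
    ultimately have free: "free_pair ?K \<rho> (insert a \<rho>)" unfolding free_pair_def by blast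
    have "collapsible ((D - {\<rho>}) \<union> insert a ` (D - {\<rho>}))"
      using psubset.IH[of "D - {\<rho>}"] \<rho>(1) psubset.prems by blast
    moreover have "collapse ?K \<rho> = (D - {\<rho>}) \<union> insert a ` (D - {\<rho>})"
      using \<rho> a\<rho> by (auto simp: collapse_def)
    ultimately have "collapsible (collapse ?K \<rho>)" by simp
    with free show ?thesis by (rule collapsible.step)
  qed (simp add: collapsible.void)
qed

lemma collapsible_Un_two_cones:
  assumes fin: "finite D" and AB: "A \<subseteq> D" "B \<subseteq> D" and ab: "a \<noteq> b"
    and D: "\<forall>\<rho>\<in>D. a \<notin> \<rho> \<and> b \<notin> \<rho>"
    and B: "collapsible B" and A: "A = D \<or> (collapsible A \<and> collapsible D)"
  shows "collapsible (D \<union> insert a ` A \<union> insert b ` B)"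
proof -
  have a_free: "\<forall>\<rho>\<in>D. a \<notin> \<rho>" and b_free: "\<forall>\<rho>\<in>B. b \<notin> \<rho>"
    using D AB by auto
  have "collapsible (D \<union> insert a ` A)"
  proof (cases "A = D")
    case True
    then show ?thesis using collapsible_cone[OF fin a_free] by simp
  next
    case False
    then have "collapsible A" "collapsible D" using A by auto
    moreover have "\<forall>\<rho>\<in>A. a \<notin> \<rho>" using a_free AB by blast
    ultimately show ?thesis using collapsible_Un_cone_image[of A a D] a_free by simp
  qed
  moreover have "\<forall>\<nu>\<in>D \<union> insert a ` A. b \<notin> \<nu>" using AB D ab by auto
  ultimately show ?thesis using collapsible_Un_cone_image[OF B b_free] by simp
qed

lemma full_polar_insert:
  assumes "k \<notin> S"
  shows "full_polar (insert k S) = full_polar S \<union> insert (Pos k) ` full_polar S \<union> insert (Neg k) ` full_polar S"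
proof (intro equalityI subsetI)
  fix G assume G: "G \<in> full_polar (insert k S)"
  consider "Pos k \<in> G" | "Neg k \<in> G" | "Pos k \<notin> G" "Neg k \<notin> G" by blast
  then show "G \<in> full_polar S \<union> insert (Pos k) ` full_polar S \<union> insert (Neg k) ` full_polar S"
  proof cases
    case 1
    then have "G = insert (Pos k) (G - {Pos k})" "G - {Pos k} \<in> full_polar S"
      using G by (auto simp: full_polar_def)
    then show ?thesis by blast
  next
    case 2
    then have "G = insert (Neg k) (G - {Neg k})" "G - {Neg k} \<in> full_polar S"
      using G by (auto simp: full_polar_def)
    then show ?thesis by blast
  next
    case 3
    then show ?thesis using G by (auto simp: full_polar_def)
  qed
qed (use assms in \<open>auto simp: full_polar_def\<close>)

lemma cell_complex_insert:
  assumes k: "k \<notin> S"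
  shows "cell_complex w h X (insert k S) = cell_complex w h X S
           \<union> insert (Pos k) ` cell_complex w h (cell w h X {Pos k}) S
           \<union> insert (Neg k) ` cell_complex w h (cell w h X {Neg k}) S"
proof (intro equalityI subsetI)
  fix G assume G: "G \<in> cell_complex w h X (insert k S)"
  then have "G \<in> full_polar (insert k S)" using cell_complex_subset_full_polar by blast
  then consider "G \<in> full_polar S" | v G' where "v \<in> {Pos k, Neg k}" "G' \<in> full_polar S" "G = insert v G'"
    unfolding full_polar_insert[OF k] by blast
  then show "G \<in> cell_complex w h X S
           \<union> insert (Pos k) ` cell_complex w h (cell w h X {Pos k}) S
           \<union> insert (Neg k) ` cell_complex w h (cell w h X {Neg k}) S"
  proof cases
    case 1
    then show ?thesis using G by (auto simp: cell_complex_def full_polar_def)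
  next
    case 2
    then have "G' \<in> cell_complex w h (cell w h X {v}) S"
      using G by (auto simp: cell_complex_def full_polar_def cell_cell)
    then show ?thesis using 2 by blast
  qed
qed (auto simp: cell_complex_def cell_cell)

(* A point of a cell lying on H_k can be pushed off H_k inside the open cell. *)
lemma cell_complex_split:
  assumes op: "open X" and fin: "finite S" and wk: "w k \<noteq> 0"
  shows "cell_complex w h X S = cell_complex w h (cell w h X {Pos k}) S \<union> cell_complex w h (cell w h X {Neg k}) S"
proof (intro equalityI subsetI)
  fix G assume G: "G \<in> cell_complex w h X S"
  then obtain x where x: "x \<in> cell w h X G" by (auto simp: cell_complex_def)
  have U: "open (cell w h X G)" using open_cell[OF op finite_cell_complex_face[OF fin G]] .
  have "\<exists>y\<in>cell w h X G. w k \<bullet> y \<noteq> h k"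
  proof (cases "w k \<bullet> x = h k")
    case True
    obtain t where t: "t > 0" "x + t *\<^sub>R w k \<in> cell w h X G" using open_ray_point[OF U x] by blast
    have "w k \<bullet> (x + t *\<^sub>R w k) = h k + t * (w k \<bullet> w k)" using True by (simp add: inner_add_right)
    moreover have "t * (w k \<bullet> w k) > 0" using t wk by simp
    ultimately show ?thesis using t by (intro bexI[of _ "x + t *\<^sub>R w k"]) auto
  next
    case False
    then show ?thesis using x by blast
  qed
  then obtain y where "y \<in> cell w h X G" "w k \<bullet> y \<noteq> h k" by blast
  then have "y \<in> cell w h (cell w h X {Pos k}) G \<or> y \<in> cell w h (cell w h X {Neg k}) G"
    unfolding cell_cell by (auto simp: cell_def side_val_def)
  then show "G \<in> cell_complex w h (cell w h X {Pos k}) S \<union> cell_complex w h (cell w h X {Neg k}) S"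
    using G by (auto simp: cell_complex_def)
next
  fix G assume "G \<in> cell_complex w h (cell w h X {Pos k}) S \<union> cell_complex w h (cell w h X {Neg k}) S"
  then show "G \<in> cell_complex w h X S"
    unfolding cell_complex_def cell_cell
    using cell_antimono[of G "{Pos k} \<union> G" w h X] cell_antimono[of G "{Neg k} \<union> G" w h X] by auto
qed

lemma cell_complex_cell_subset: "cell_complex w h (cell w h X G) S \<subseteq> cell_complex w h X S"
  using cell_antimono[of _ "G \<union> _" w h X] by (fastforce simp: cell_complex_def cell_cell)

lemma cell_complex_cell_eq_if_meets:
  assumes op: "open X" and fin: "finite S" "finite G" and st: "stable_on w h X S"
    and meet: "cell w h X G \<inter> (\<Inter>i\<in>S. hyp w h i) \<noteq> {}"
  shows "cell_complex w h (cell w h X G) S = cell_complex w h X S"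
proof -
  have "cell_complex w h (cell w h X G) S = full_polar S"
    using cell_complex_eq_full_polar[OF open_cell[OF op fin(2)] fin(1)
        stable_on_mono[OF st order_refl cell_subset] meet] .
  then show ?thesis
    using cell_complex_cell_subset[of w h X G S] cell_complex_subset_full_polar[of w h X S] by blast
qed

lemma meets_side_or_hyperplane:
  assumes "X \<inter> (\<Inter>i\<in>S. hyp w h i) \<noteq> {}"
  shows "cell w h X {Pos k} \<inter> (\<Inter>i\<in>S. hyp w h i) \<noteq> {} \<or>
         cell w h X {Neg k} \<inter> (\<Inter>i\<in>S. hyp w h i) \<noteq> {} \<or>
         X \<inter> (\<Inter>i\<in>insert k S. hyp w h i) \<noteq> {}"
proof -
  obtain p where p: "p \<in> X" "p \<in> (\<Inter>i\<in>S. hyp w h i)" using assms by blast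
  consider "w k \<bullet> p > h k" | "w k \<bullet> p < h k" | "w k \<bullet> p = h k" by linarith
  then show ?thesis
  proof cases
    case 1
    then have "p \<in> cell w h X {Pos k}" using p(1) by (simp add: cell_def side_val_def)
    then show ?thesis using p(2) by blast
  next
    case 2
    then have "p \<in> cell w h X {Neg k}" using p(1) by (simp add: cell_def side_val_def)
    then show ?thesis using p(2) by blast
  next
    case 3
    then have "p \<in> (\<Inter>i\<in>insert k S. hyp w h i)" using p(2) by (simp add: hyp_def)
    then show ?thesis using p(1) by blast
  qed
qed

lemma convex_meets_hyperplane_between:
  assumes cv: "convex X"
    and "cell w h X {Pos k} \<inter> (\<Inter>i\<in>S. hyp w h i) \<noteq> {}"
    and "cell w h X {Neg k} \<inter> (\<Inter>i\<in>S. hyp w h i) \<noteq> {}"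
  shows "X \<inter> (\<Inter>i\<in>insert k S. hyp w h i) \<noteq> {}"
proof -
  obtain p q where p: "p \<in> cell w h X {Pos k}" "p \<in> (\<Inter>i\<in>S. hyp w h i)"
    and q: "q \<in> cell w h X {Neg k}" "q \<in> (\<Inter>i\<in>S. hyp w h i)"
    using assms(2,3) by blast
  have pX: "p \<in> X" and pk: "w k \<bullet> p > h k" and qX: "q \<in> X" and qk: "w k \<bullet> q < h k"
    using p(1) q(1) by (simp_all add: cell_def side_val_def)
  define t where "t = (w k \<bullet> p - h k) / (w k \<bullet> p - w k \<bullet> q)"
  have t: "0 \<le> t" "0 \<le> 1 - t" using pk qk by (auto simp: t_def field_simps)
  define z where "z = (1 - t) *\<^sub>R p + t *\<^sub>R q"
  have "z \<in> X" unfolding z_def using convexD[OF cv pX qX t(2) t(1)] by simp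
  moreover have "w i \<bullet> z = h i" if "i \<in> S" for i
    using p(2) q(2) that by (simp add: z_def hyp_def inner_add_right algebra_simps)
  moreover have "w k \<bullet> z = h k"
  proof -
    have "w k \<bullet> z = w k \<bullet> p - t * (w k \<bullet> p - w k \<bullet> q)"
      by (simp add: z_def inner_add_right algebra_simps)
    then show ?thesis using pk qk by (simp add: t_def)
  qed
  ultimately show ?thesis by (auto simp: hyp_def)
qed

section \<open>The cell complex is collapsible or full\<close>

lemma collapsible_cell_complex_insert:
  fixes w :: "nat \<Rightarrow> 'a::euclidean_space" and h X S k
  defines "A \<equiv> cell_complex w h (cell w h X {Pos k}) S"
    and "B \<equiv> cell_complex w h (cell w h X {Neg k}) S"
    and "D \<equiv> cell_complex w h X S"
  assumes fin: "finite S" and k: "k \<notin> S" and op: "open X" and wk: "w k \<noteq> 0"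
    and coll: "(A = D \<and> collapsible B) \<or> (B = D \<and> collapsible A) \<or>
      (collapsible A \<and> collapsible B \<and> collapsible D)"
  shows "collapsible (cell_complex w h X (insert k S))"
proof -
  have K: "cell_complex w h X (insert k S) = D \<union> insert (Pos k) ` A \<union> insert (Neg k) ` B"
    unfolding A_def B_def D_def by (rule cell_complex_insert[OF k])
  have AB: "A \<subseteq> D" "B \<subseteq> D"
    using cell_complex_split[where w = w and k = k, OF op fin wk]
    unfolding A_def B_def D_def by blast+
  have finD: "finite D" unfolding D_def using fin by (rule finite_cell_complex)
  have noK: "\<forall>\<rho>\<in>D. Pos k \<notin> \<rho> \<and> Neg k \<notin> \<rho>" "\<forall>\<rho>\<in>D. Neg k \<notin> \<rho> \<and> Pos k \<notin> \<rho>"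
    using k by (auto simp: D_def cell_complex_def)
  show ?thesis
  proof (cases "collapsible B \<and> (A = D \<or> (collapsible A \<and> collapsible D))")
    case True
    then show ?thesis using collapsible_Un_two_cones[OF finD AB _ noK(1)] K by simp
  next
    case False
    then have "collapsible A" "B = D" using coll by blast+
    then have "collapsible (D \<union> insert (Neg k) ` B \<union> insert (Pos k) ` A)"
      using collapsible_Un_two_cones[OF finD AB(2,1) _ noK(2)] by simp
    then show ?thesis using K by (simp add: Un_ac)
  qed
qed

lemma cell_complex_collapsible_or_meets:
  assumes "finite S" "open X" "convex X" "stable_on w h X S"
  shows "collapsible (cell_complex w h X S) \<or> X \<inter> (\<Inter>i\<in>S. hyp w h i) \<noteq> {}"
  using assms
proof (induction S arbitrary: X rule: finite_induct)
  case empty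
  show ?case
  proof (cases "X = {}")
    case True
    then have "cell_complex w h X {} = {}" by (simp add: cell_complex_def cell_def)
    then show ?thesis by (simp add: collapsible.void)
  qed simp
next
  case (insert k S)
  let ?meets = "\<lambda>Y. Y \<inter> (\<Inter>i\<in>S. hyp w h i) \<noteq> {}"
  define Xp where "Xp = cell w h X {Pos k}"
  define Xn where "Xn = cell w h X {Neg k}"
  define A where "A = cell_complex w h Xp S"
  define B where "B = cell_complex w h Xn S"
  define D where "D = cell_complex w h X S"
  have st: "stable_on w h X S" "stable_on w h Xp S" "stable_on w h Xn S"
    unfolding Xp_def Xn_def using stable_on_mono[OF insert.prems(3) subset_insertI] cell_subset by blast+
  have oc: "open Xp" "open Xn" "convex Xp" "convex Xn"
    using insert.prems(1,2) unfolding Xp_def Xn_def by (simp_all add: open_cell convex_cell)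
  have IH: "collapsible A \<or> ?meets Xp" "collapsible B \<or> ?meets Xn" "collapsible D \<or> ?meets X"
    unfolding A_def B_def D_def
    by (rule insert.IH[OF oc(1,3) st(2)], rule insert.IH[OF oc(2,4) st(3)],
        rule insert.IH[OF insert.prems(1,2) st(1)])
  have A_full: "A = D" if "?meets Xp"
    using cell_complex_cell_eq_if_meets[OF insert.prems(1) insert.hyps(1) _ st(1)] that
    by (simp add: A_def D_def Xp_def)
  have B_full: "B = D" if "?meets Xn"
    using cell_complex_cell_eq_if_meets[OF insert.prems(1) insert.hyps(1) _ st(1)] that
    by (simp add: B_def D_def Xn_def)
  have wk: "w k \<noteq> 0" using insert.prems(3) by (simp add: stable_on_def)
  have collapsible_K: "collapsible (cell_complex w h X (insert k S))"
    if "(A = D \<and> collapsible B) \<or> (B = D \<and> collapsible A) \<or>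
      (collapsible A \<and> collapsible B \<and> collapsible D)"
    using that unfolding A_def B_def D_def Xp_def Xn_def
    by (rule collapsible_cell_complex_insert[where w = w and k = k, OF insert.hyps(1,2) insert.prems(1) wk])
  show ?case
  proof (cases "?meets Xp \<and> ?meets Xn")
    case True
    show ?thesis
      by (rule disjI2, rule convex_meets_hyperplane_between[OF insert.prems(2)])
         (use True in \<open>simp_all add: Xp_def Xn_def\<close>)
  next
    case False
    then consider "?meets Xp" "\<not> ?meets Xn" | "\<not> ?meets Xp" "?meets Xn"
      | "\<not> ?meets Xp" "\<not> ?meets Xn" by blast
    then show ?thesis
    proof cases
      case 1
      then have "A = D \<and> collapsible B" using A_full IH(2) by blast
      then show ?thesis using collapsible_K by blast
    next
      case 2
      then have "B = D \<and> collapsible A" using B_full IH(1) by blast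
      then show ?thesis using collapsible_K by blast
    next
      case 3
      then have "collapsible A \<and> collapsible B" using IH(1,2) by blast
      moreover have "collapsible D \<or> X \<inter> (\<Inter>i\<in>insert k S. hyp w h i) \<noteq> {}"
      proof (cases "collapsible D")
        case False
        then have "?meets X" using IH(3) by blast
        then show ?thesis using meets_side_or_hyperplane[of X w h S k] 3 unfolding Xp_def Xn_def by blast
      qed simp
      ultimately show ?thesis using collapsible_K by blast
    qed
  qed
qed

(* The faces Neg j of F with x on H_j are turned into strict ones by moving x along a direction
   that decreases all these w_j at once; stability supplies it. *)
lemma cell_nonempty_of_weak_point:
  assumes st: "stable_on w h X S" and fin: "finite S" and op: "open X"
    and Fs: "F \<subseteq> Pos ` S \<union> Neg ` S" and xX: "x \<in> X"
    and xp: "\<forall>i. Pos i \<in> F \<longrightarrow> w i \<bullet> x > h i"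
    and xn: "\<forall>j. Neg j \<in> F \<longrightarrow> w j \<bullet> x \<le> h j"
  shows "cell w h X F \<noteq> {}"
proof -
  define \<tau> where "\<tau> = {j\<in>S. Neg j \<in> F \<and> w j \<bullet> x = h j}"
  have \<tau>: "finite \<tau>" "\<tau> \<subseteq> S" "\<forall>j\<in>\<tau>. w j \<bullet> x = h j" using fin by (auto simp: \<tau>_def)
  obtain v where v: "\<forall>j\<in>\<tau>. w j \<bullet> v = -1"
    using stable_on_solve_inner[OF st \<tau>(1,2) xX \<tau>(3), of "\<lambda>_. -1"] by blast
  define F0 where "F0 = F - Neg ` \<tau>"
  have "finite F" using Fs by (rule finite_subset) (use fin in auto)
  then have U: "open (cell w h X F0)" using open_cell[OF op] by (simp add: F0_def)
  have "0 < side_val w h u x" if u: "u \<in> F0" for u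
  proof (cases u)
    case (Pos i)
    then show ?thesis using u xp by (simp add: F0_def side_val_def)
  next
    case (Neg j)
    then have j: "Neg j \<in> F" "j \<notin> \<tau>" using u by (auto simp: F0_def)
    then have "j \<in> S" using Fs by auto
    then have "w j \<bullet> x \<noteq> h j" using j by (simp add: \<tau>_def)
    moreover have "w j \<bullet> x \<le> h j" using xn j(1) by blast
    ultimately show ?thesis using Neg by (simp add: side_val_def)
  qed
  then have "x \<in> cell w h X F0" using xX by (simp add: cell_def)
  then obtain t where t: "t > 0" "x + t *\<^sub>R v \<in> cell w h X F0" using open_ray_point[OF U] by blast
  have "0 < side_val w h u (x + t *\<^sub>R v)" if u: "u \<in> F" for u
  proof (cases "u \<in> F0")
    case True
    then show ?thesis using t(2) by (simp add: cell_def)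
  next
    case False
    then obtain j where "j \<in> \<tau>" "u = Neg j" using u by (auto simp: F0_def)
    then show ?thesis using v t(1) by (simp add: \<tau>_def side_val_def inner_add_right)
  qed
  then have "x + t *\<^sub>R v \<in> cell w h X F" using t(2) by (simp add: cell_def)
  then show ?thesis by blast
qed

lemma polar_complex_hcode_eq_cell_complex:
  assumes st: "stable_on w h X {1..n}" and op: "open X"
  shows "polar_complex n (hcode n w h X) = cell_complex w h X {1..n}"
proof (intro equalityI subsetI)
  fix F assume "F \<in> polar_complex n (hcode n w h X)"
  then obtain \<sigma> x where \<sigma>: "\<sigma> \<subseteq> {1..n}" "F \<subseteq> Sig n \<sigma>" and x: "x \<in> atom n w h X \<sigma>"
    by (auto simp: polar_complex_def hcode_def)
  have Fs: "F \<subseteq> Pos ` {1..n} \<union> Neg ` {1..n}" using \<sigma> unfolding Sig_def by blast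
  have "cell w h X F \<noteq> {}"
  proof (rule cell_nonempty_of_weak_point[OF st finite_atLeastAtMost op Fs])
    show "x \<in> X" "\<forall>i. Pos i \<in> F \<longrightarrow> w i \<bullet> x > h i"
      using \<sigma>(2) x by (auto simp: Sig_def atom_def hyp_pos_def)
    show "\<forall>j. Neg j \<in> F \<longrightarrow> w j \<bullet> x \<le> h j"
    proof (intro allI impI)
      fix j assume "Neg j \<in> F"
      then have "j \<in> {1..n} - \<sigma>" using \<sigma>(2) by (auto simp: Sig_def)
      then show "w j \<bullet> x \<le> h j" using x by (auto simp: atom_def hyp_pos_def not_less)
    qed
  qed
  then show "F \<in> cell_complex w h X {1..n}" using Fs by (simp add: cell_complex_def)
next
  fix F assume "F \<in> cell_complex w h X {1..n}"
  then obtain x where Fs: "F \<subseteq> Pos ` {1..n} \<union> Neg ` {1..n}" and x: "x \<in> cell w h X F"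
    by (auto simp: cell_complex_def)
  define \<sigma> where "\<sigma> = {i\<in>{1..n}. w i \<bullet> x - h i > 0}"
  have "\<sigma> \<in> hcode n w h X"
    using x by (auto simp: hcode_def atom_def \<sigma>_def hyp_pos_def cell_def)
  moreover have "F \<subseteq> Sig n \<sigma>"
  proof
    fix u assume u: "u \<in> F"
    then have "0 < side_val w h u x" using x by (simp add: cell_def)
    then show "u \<in> Sig n \<sigma>" using u Fs by (cases u) (auto simp: Sig_def \<sigma>_def side_val_def)
  qed
  ultimately show "F \<in> polar_complex n (hcode n w h X)" by (auto simp: polar_complex_def)
qed

lemma link_cell_complex:
  assumes F: "F \<in> cell_complex w h X S"
  shows "link F (cell_complex w h X S) = cell_complex w h (cell w h X F) (S - supp F)"
proof (intro equalityI subsetI)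
  fix \<nu> assume "\<nu> \<in> link F (cell_complex w h X S)"
  then have \<nu>: "\<nu> \<in> cell_complex w h X S" "\<nu> \<inter> F = {}" "\<nu> \<union> F \<in> cell_complex w h X S"
    by (auto simp: link_def)
  have nc: "\<not> (Pos i \<in> \<nu> \<union> F \<and> Neg i \<in> \<nu> \<union> F)" for i
    using cell_complex_subset_full_polar[of w h X S] \<nu>(3) by (auto simp: full_polar_def)
  have "u \<in> Pos ` (S - supp F) \<union> Neg ` (S - supp F)" if u: "u \<in> \<nu>" for u
  proof -
    have "u \<in> Pos ` S \<union> Neg ` S" using u \<nu>(1) by (auto simp: cell_complex_def)
    moreover have "Pos i \<notin> F" "Neg i \<notin> F" if "u = Pos i \<or> u = Neg i" for i
      using that u \<nu>(2) nc[of i] by auto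
    ultimately show ?thesis by (cases u) (auto simp: supp_def pos_part_def neg_part_def)
  qed
  moreover have "cell w h (cell w h X F) \<nu> \<noteq> {}"
    using \<nu>(3) unfolding cell_cell by (simp add: cell_complex_def Un_commute)
  ultimately show "\<nu> \<in> cell_complex w h (cell w h X F) (S - supp F)"
    by (auto simp: cell_complex_def)
next
  fix \<nu> assume "\<nu> \<in> cell_complex w h (cell w h X F) (S - supp F)"
  then have \<nu>: "\<nu> \<subseteq> Pos ` (S - supp F) \<union> Neg ` (S - supp F)" "cell w h X (F \<union> \<nu>) \<noteq> {}"
    by (auto simp: cell_complex_def cell_cell)
  have "cell w h X \<nu> \<noteq> {}" using \<nu>(2) cell_antimono[of \<nu> "F \<union> \<nu>" w h X] by blast
  moreover have "\<nu> \<inter> F = {}"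
    using \<nu>(1) by (force simp: supp_def pos_part_def neg_part_def)
  moreover have "\<nu> \<union> F \<in> cell_complex w h X S"
    using \<nu> F by (auto simp: cell_complex_def Un_commute)
  ultimately show "\<nu> \<in> link F (cell_complex w h X S)"
    using \<nu>(1) by (auto simp: link_def cell_complex_def)
qed

theorem theoremB:
  fixes n :: nat and w :: "nat \<Rightarrow> 'a::euclidean_space" and h :: "nat \<Rightarrow> real" and X :: "'a set"
  assumes "stable_pair n w h X"
  shows "\<forall>F \<in> polar_complex n (hcode n w h X).
           \<not> facet (polar_complex n (hcode n w h X)) F \<longrightarrow>
             collapsible (link F (polar_complex n (hcode n w h X))) \<or>
             link F (polar_complex n (hcode n w h X)) = full_polar ({1..n} - supp F)"
proof (intro ballI impI)
  fix F assume "F \<in> polar_complex n (hcode n w h X)"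
  have st: "stable_on w h X {1..n}" and op: "open X" and cv: "convex X"
    using assms by (auto simp: stable_pair_def stable_on_def)
  let ?S = "{1..n} - supp F" and ?Y = "cell w h X F"
  have \<Gamma>: "polar_complex n (hcode n w h X) = cell_complex w h X {1..n}"
    by (rule polar_complex_hcode_eq_cell_complex[OF st op])
  then have F: "F \<in> cell_complex w h X {1..n}" using \<open>F \<in> _\<close> by simp
  then have link: "link F (polar_complex n (hcode n w h X)) = cell_complex w h ?Y ?S"
    unfolding \<Gamma> by (rule link_cell_complex)
  have Y: "open ?Y" "convex ?Y" "stable_on w h ?Y ?S"
    using open_cell[OF op finite_cell_complex_face[OF _ F]] convex_cell[OF cv]
      stable_on_mono[OF st Diff_subset cell_subset] by simp_all
  show "collapsible (link F (polar_complex n (hcode n w h X))) \<or>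
        link F (polar_complex n (hcode n w h X)) = full_polar ?S"
    using cell_complex_collapsible_or_meets[OF _ Y] cell_complex_eq_full_polar[OF Y(1) _ Y(3)]
    unfolding link by blast
qed

end
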